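(* Let $(\mathbf{F},\Delta)$ be a poset comonoid and $(\mathbf{F},\Box)$ a poset monoid on the same poset species $\mathbf{F}$ which form an adjoint pair with $\Delta\dashv\Box$. For a finite set $I$ and $x\in\mathbf{F}[I]$ let $\omega_x=\sum_{x\le y}\mu(x,y)\,y\in\mathbf{k}\mathbf{F}[I]$. Then for every decomposition $I=S\sqcup T$, \[\Delta_{S,T}(\omega_x)=\sum_{\substack{x_1\in\mathbf{F}[S],\,x_2\in\mathbf{F}[T]\\ \Box_{S,T}(x_1,x_2)=x}}\omega_{x_1}\otimes\omega_{x_2}.\]
   Context: $\mathbf{k}$ is a field of characteristic $0$. A (connected) poset species $\mathbf{F}$ assigns to each finite set $I$ a locally finite poset $\mathbf{F}[I]$, with $\mathbf{F}[\emptyset]$ a singleton $\{1\}$, and to each bijection $f:I\to J$ an order-preserving bijection $\mathbf{F}[f]:\mathbf{F}[I]\to\mathbf{F}[J]$, functorially. A poset monoid $(\mathbf{F},\Box)$ consists of order-preserving maps $\Box_{S,T}:\mathbf{F}[S]\times\mathbf{F}[T]\to\mathbf{F}[S\sqcup T]$ (product order on the source) for all pairs of disjoint finite sets $S,T$, natural with respect to bijections, associative, and with $1\in\mathbf{F}[\emptyset]$ a two-sided unit. A poset comonoid $(\mathbf{F},\Delta)$ consists of order-preserving maps $\Delta_{S,T}:\mathbf{F}[S\sqcup T]\to\mathbf{F}[S]\times\mathbf{F}[T]$, natural, coassociative, and counital ($\Delta_{I,\emptyset}(x)=(x,1)$, $\Delta_{\emptyset,I}(x)=(1,x)$). They form an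 adjoint pair with $\Delta\dashv\Box$ if for all disjoint $S,T$, $x\in\mathbf{F}[S\sqcup T]$, $y\in\mathbf{F}[S]$, $z\in\mathbf{F}[T]$: $\Delta_{S,T}(x)\le(y,z)$ (product order) iff $x\le\Box_{S,T}(y,z)$. The linearization $\mathbf{k}\mathbf{F}[I]$ is the vector space with basis $\mathbf{F}[I]$; $\Delta_{S,T}$ is extended linearly to $\mathbf{k}\mathbf{F}[I]\to\mathbf{k}\mathbf{F}[S]\otimes\mathbf{k}\mathbf{F}[T]$ by $x\mapsto y\otimes z$ when $\Delta_{S,T}(x)=(y,z)$. $\mu$ is the Möbius function of the poset $\mathbf{F}[I]$; the $\omega_x$ form the inverted basis. *)

theory Defs
  imports Main
begin

definition partial_order_on_set :: "'e set \<Rightarrow> ('e \<Rightarrow> 'e \<Rightarrow> bool) \<Rightarrow> bool" where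
  "partial_order_on_set A le \<longleftrightarrow>
     (\<forall>x\<in>A. le x x) \<and>
     (\<forall>x\<in>A. \<forall>y\<in>A. le x y \<and> le y x \<longrightarrow> x = y) \<and>
     (\<forall>x\<in>A. \<forall>y\<in>A. \<forall>z\<in>A. le x y \<and> le y z \<longrightarrow> le x z)"

definition locally_finite_poset :: "'e set \<Rightarrow> ('e \<Rightarrow> 'e \<Rightarrow> bool) \<Rightarrow> bool" where
  "locally_finite_poset A le \<longleftrightarrow> partial_order_on_set A le \<and>
     (\<forall>x\<in>A. \<forall>y\<in>A. finite {z\<in>A. le x z \<and> le z y})"

definition mobius :: "'e set \<Rightarrow> ('e \<Rightarrow> 'e \<Rightarrow> bool) \<Rightarrow> 'e \<Rightarrow> 'e \<Rightarrow> 'k::field" where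
  "mobius A le = (THE m. \<forall>x y. m x y =
      (if x \<in> A \<and> y \<in> A \<and> le x y then
         (if x = y then 1 else - (\<Sum>z\<in>{z\<in>A. le x z \<and> le z y \<and> z \<noteq> y}. m x z))
       else 0))"

text \<open>Elements of the linearization kF[I] (and of its completion) are represented by
  their coefficient functions; basis element e is bas e.\<close>
definition bas :: "'e \<Rightarrow> 'e \<Rightarrow> 'k::field" where
  "bas e = (\<lambda>u. if u = e then 1 else 0)"

definition tens :: "('e \<Rightarrow> 'k::field) \<Rightarrow> ('e \<Rightarrow> 'k) \<Rightarrow> ('e \<times> 'e \<Rightarrow> 'k)" where
  "tens f g = (\<lambda>(y, z). f y * g z)"

text \<open>Sum of a family of vectors, computed coefficientwise (each coefficient only
  receives finitely many nonzero contributions in all uses below).\<close>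
definition formal_sum :: "('i \<Rightarrow> 'v \<Rightarrow> 'k::field) \<Rightarrow> 'i set \<Rightarrow> 'v \<Rightarrow> 'k" where
  "formal_sum f P = (\<lambda>v. \<Sum>i\<in>{i\<in>P. f i v \<noteq> 0}. f i v)"

text \<open>A poset species: car I is the underlying set of F[I], le I its order,
  act f I the map F[f] : F[I] \<rightarrow> F[f ` I] for f injective on I, one the unique element of F[{}].\<close>
definition poset_species ::
  "('a set \<Rightarrow> 'e set) \<Rightarrow> ('a set \<Rightarrow> 'e \<Rightarrow> 'e \<Rightarrow> bool) \<Rightarrow> (('a \<Rightarrow> 'a) \<Rightarrow> 'a set \<Rightarrow> 'e \<Rightarrow> 'e) \<Rightarrow> 'e \<Rightarrow> bool" where
  "poset_species car le act one \<longleftrightarrow>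
     (\<forall>I. finite I \<longrightarrow> locally_finite_poset (car I) (le I)) \<and>
     car {} = {one} \<and>
     (\<forall>I f. finite I \<and> inj_on f I \<longrightarrow>
        bij_betw (act f I) (car I) (car (f ` I)) \<and>
        (\<forall>x\<in>car I. \<forall>y\<in>car I. le I x y \<longrightarrow> le (f ` I) (act f I x) (act f I y))) \<and>
     (\<forall>I f g. finite I \<and> (\<forall>i\<in>I. f i = g i) \<longrightarrow> (\<forall>x\<in>car I. act f I x = act g I x)) \<and>
     (\<forall>I. finite I \<longrightarrow> (\<forall>x\<in>car I. act id I x = x)) \<and>
     (\<forall>I f g. finite I \<and> inj_on f I \<and> inj_on g (f ` I) \<longrightarrow>
        (\<forall>x\<in>car I. act (g \<circ> f) I x = act g (f ` I) (act f I x)))"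

definition poset_monoid ::
  "('a set \<Rightarrow> 'e set) \<Rightarrow> ('a set \<Rightarrow> 'e \<Rightarrow> 'e \<Rightarrow> bool) \<Rightarrow> (('a \<Rightarrow> 'a) \<Rightarrow> 'a set \<Rightarrow> 'e \<Rightarrow> 'e) \<Rightarrow> 'e
    \<Rightarrow> ('a set \<Rightarrow> 'a set \<Rightarrow> 'e \<Rightarrow> 'e \<Rightarrow> 'e) \<Rightarrow> bool" where
  "poset_monoid car le act one mult \<longleftrightarrow>
     poset_species car le act one \<and>
     \<comment> \<open>maps F[S] x F[T] -> F[S u T]\<close>
     (\<forall>S T. finite S \<and> finite T \<and> S \<inter> T = {} \<longrightarrow>
        (\<forall>x\<in>car S. \<forall>y\<in>car T. mult S T x y \<in> car (S \<union> T))) \<and>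
     \<comment> \<open>order preserving for the product order\<close>
     (\<forall>S T. finite S \<and> finite T \<and> S \<inter> T = {} \<longrightarrow>
        (\<forall>x\<in>car S. \<forall>x'\<in>car S. \<forall>y\<in>car T. \<forall>y'\<in>car T.
           le S x x' \<and> le T y y' \<longrightarrow> le (S \<union> T) (mult S T x y) (mult S T x' y'))) \<and>
     \<comment> \<open>naturality\<close>
     (\<forall>S T f. finite S \<and> finite T \<and> S \<inter> T = {} \<and> inj_on f (S \<union> T) \<longrightarrow>
        (\<forall>x\<in>car S. \<forall>y\<in>car T.
           act f (S \<union> T) (mult S T x y) = mult (f ` S) (f ` T) (act f S x) (act f T y))) \<and>
     \<comment> \<open>associativity\<close>
     (\<forall>S T U. finite S \<and> finite T \<and> finite U \<and> S \<inter> T = {} \<and> S \<inter> U = {} \<and> T \<inter> U = {} \<longrightarrow>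
        (\<forall>x\<in>car S. \<forall>y\<in>car T. \<forall>z\<in>car U.
           mult (S \<union> T) U (mult S T x y) z = mult S (T \<union> U) x (mult T U y z))) \<and>
     \<comment> \<open>unit\<close>
     (\<forall>I. finite I \<longrightarrow> (\<forall>x\<in>car I. mult {} I one x = x \<and> mult I {} x one = x))"

definition poset_comonoid ::
  "('a set \<Rightarrow> 'e set) \<Rightarrow> ('a set \<Rightarrow> 'e \<Rightarrow> 'e \<Rightarrow> bool) \<Rightarrow> (('a \<Rightarrow> 'a) \<Rightarrow> 'a set \<Rightarrow> 'e \<Rightarrow> 'e) \<Rightarrow> 'e
    \<Rightarrow> ('a set \<Rightarrow> 'a set \<Rightarrow> 'e \<Rightarrow> 'e \<times> 'e) \<Rightarrow> bool" where
  "poset_comonoid car le act one comult \<longleftrightarrow>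
     poset_species car le act one \<and>
     \<comment> \<open>maps F[S u T] -> F[S] x F[T]\<close>
     (\<forall>S T. finite S \<and> finite T \<and> S \<inter> T = {} \<longrightarrow>
        (\<forall>x\<in>car (S \<union> T). fst (comult S T x) \<in> car S \<and> snd (comult S T x) \<in> car T)) \<and>
     \<comment> \<open>order preserving into the product order\<close>
     (\<forall>S T. finite S \<and> finite T \<and> S \<inter> T = {} \<longrightarrow>
        (\<forall>x\<in>car (S \<union> T). \<forall>x'\<in>car (S \<union> T). le (S \<union> T) x x' \<longrightarrow>
           le S (fst (comult S T x)) (fst (comult S T x')) \<and>
           le T (snd (comult S T x)) (snd (comult S T x')))) \<and>
     \<comment> \<open>naturality\<close>
     (\<forall>S T f. finite S \<and> finite T \<and> S \<inter> T = {} \<and> inj_on f (S \<union> T) \<longrightarrow>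
        (\<forall>x\<in>car (S \<union> T).
           comult (f ` S) (f ` T) (act f (S \<union> T) x) =
             (act f S (fst (comult S T x)), act f T (snd (comult S T x))))) \<and>
     \<comment> \<open>coassociativity\<close>
     (\<forall>S T U. finite S \<and> finite T \<and> finite U \<and> S \<inter> T = {} \<and> S \<inter> U = {} \<and> T \<inter> U = {} \<longrightarrow>
        (\<forall>x\<in>car (S \<union> T \<union> U).
           comult S T (fst (comult (S \<union> T) U x)) =
             (fst (comult S (T \<union> U) x), fst (comult T U (snd (comult S (T \<union> U) x)))) \<and>
           snd (comult (S \<union> T) U x) = snd (comult T U (snd (comult S (T \<union> U) x))))) \<and>
     \<comment> \<open>counit\<close>
     (\<forall>I. finite I \<longrightarrow> (\<forall>x\<in>car I. comult I {} x = (x, one) \<and> comult {} I x = (one, x)))"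

definition adjoint_pair ::
  "('a set \<Rightarrow> 'e set) \<Rightarrow> ('a set \<Rightarrow> 'e \<Rightarrow> 'e \<Rightarrow> bool)
    \<Rightarrow> ('a set \<Rightarrow> 'a set \<Rightarrow> 'e \<Rightarrow> 'e \<times> 'e) \<Rightarrow> ('a set \<Rightarrow> 'a set \<Rightarrow> 'e \<Rightarrow> 'e \<Rightarrow> 'e) \<Rightarrow> bool" where
  "adjoint_pair car le comult mult \<longleftrightarrow>
     (\<forall>S T. finite S \<and> finite T \<and> S \<inter> T = {} \<longrightarrow>
        (\<forall>x\<in>car (S \<union> T). \<forall>y\<in>car S. \<forall>z\<in>car T.
           (le S (fst (comult S T x)) y \<and> le T (snd (comult S T x)) z) \<longleftrightarrow>
           le (S \<union> T) x (mult S T y z)))"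

definition omega :: "('a set \<Rightarrow> 'e set) \<Rightarrow> ('a set \<Rightarrow> 'e \<Rightarrow> 'e \<Rightarrow> bool) \<Rightarrow> 'a set \<Rightarrow> 'e \<Rightarrow> 'e \<Rightarrow> 'k::field" where
  "omega car le I x = formal_sum (\<lambda>y. \<lambda>u. mobius (car I) (le I) x y * bas y u) {y\<in>car I. le I x y}"

definition lin_comult :: "('a set \<Rightarrow> 'e set) \<Rightarrow> ('a set \<Rightarrow> 'a set \<Rightarrow> 'e \<Rightarrow> 'e \<times> 'e)
    \<Rightarrow> 'a set \<Rightarrow> 'a set \<Rightarrow> ('e \<Rightarrow> 'k::field) \<Rightarrow> ('e \<times> 'e \<Rightarrow> 'k)" where
  "lin_comult car comult S T v =
     formal_sum (\<lambda>w. \<lambda>p. v w * tens (bas (fst (comult S T w))) (bas (snd (comult S T w))) p) (car (S \<union> T))"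

end

theory Submission
  imports Defs
begin

(* Delta and Box form a Galois connection D -| M between the locally finite posets
  F[S u T] and F[S] x F[T], and the identity holds for every such connection. Fix x and read
  both sides as functions h of p in F[S] x F[T]. Both vanish unless D x <= p, and both satisfy
  sum_{D x <= p' <= p} h(p') = [M p = x]: on the left because D w <= p iff w <= M p turns the
  sum into sum_{x <= w <= M p} mu(x, w); on the right by summing the Moebius function of the
  product poset, which is the product of the Moebius functions, over the intervals [q, p].
  Such interval sums determine h, by induction on the size of [D x, p]. *)

definition poset_interval :: "'e set \<Rightarrow> ('e \<Rightarrow> 'e \<Rightarrow> bool) \<Rightarrow> 'e \<Rightarrow> 'e \<Rightarrow> 'e set" where
  "poset_interval A le a b = {z \<in> A. le a z \<and> le z b}"

definition mobius_rec ::
  "'e set \<Rightarrow> ('e \<Rightarrow> 'e \<Rightarrow> bool) \<Rightarrow> ('e \<Rightarrow> 'e \<Rightarrow> 'k) \<Rightarrow> 'e \<Rightarrow> 'e \<Rightarrow> 'k::field" where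
  "mobius_rec A le m x y =
    (if x \<in> A \<and> y \<in> A \<and> le x y then
       (if x = y then 1 else - (\<Sum>z\<in>{z\<in>A. le x z \<and> le z y \<and> z \<noteq> y}. m x z))
     else 0)"

locale lf_poset =
  fixes A :: "'e set" and le :: "'e \<Rightarrow> 'e \<Rightarrow> bool"
  assumes locally_finite: "locally_finite_poset A le"
begin

lemma reflexive: "x \<in> A \<Longrightarrow> le x x"
  and antisymmetric: "x \<in> A \<Longrightarrow> y \<in> A \<Longrightarrow> le x y \<Longrightarrow> le y x \<Longrightarrow> x = y"
  and transitive: "x \<in> A \<Longrightarrow> y \<in> A \<Longrightarrow> z \<in> A \<Longrightarrow> le x y \<Longrightarrow> le y z \<Longrightarrow> le x z"
  and finite_interval: "x \<in> A \<Longrightarrow> y \<in> A \<Longrightarrow> finite (poset_interval A le x y)"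
  using locally_finite
  unfolding locally_finite_poset_def partial_order_on_set_def poset_interval_def by blast+

lemma mem_interval_iff: "z \<in> poset_interval A le x y \<longleftrightarrow> z \<in> A \<and> le x z \<and> le z y"
  by (simp add: poset_interval_def)

lemma interval_psubset:
  assumes "a \<in> A" "y \<in> A" "z \<in> poset_interval A le a y" "z \<noteq> y"
  shows "poset_interval A le a z \<subset> poset_interval A le a y"
proof
  from assms(3) have z: "z \<in> A" "le a z" "le z y" by (simp_all add: mem_interval_iff)
  show "poset_interval A le a z \<subseteq> poset_interval A le a y"
  proof
    fix w assume "w \<in> poset_interval A le a z"
    then have "w \<in> A" "le a w" "le w z" by (simp_all add: mem_interval_iff)
    then show "w \<in> poset_interval A le a y"
      using transitive[OF \<open>w \<in> A\<close> z(1) assms(2)] z by (simp add: mem_interval_iff)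
  qed
  have "y \<in> poset_interval A le a y"
    using assms(1,2) z transitive[OF assms(1) z(1) assms(2)] reflexive[OF assms(2)]
    by (simp add: mem_interval_iff)
  moreover have "y \<notin> poset_interval A le a z"
    using antisymmetric[OF z(1) assms(2) z(3)] assms(4) by (auto simp: mem_interval_iff)
  ultimately show "poset_interval A le a z \<noteq> poset_interval A le a y" by blast
qed

lemma card_interval_less:
  assumes "a \<in> A" "y \<in> A" "z \<in> poset_interval A le a y" "z \<noteq> y"
  shows "card (poset_interval A le a z) < card (poset_interval A le a y)"
  using psubset_card_mono[OF finite_interval interval_psubset] assms by blast

lemma eq_if_interval_sums_eq:
  fixes f g :: "'e \<Rightarrow> 'a::cancel_comm_monoid_add"
  assumes "b \<in> A"
    and sums_eq: "\<And>p. p \<in> A \<Longrightarrow> le b p \<Longrightarrow>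
      sum f (poset_interval A le b p) = sum g (poset_interval A le b p)"
  shows "p \<in> A \<Longrightarrow> le b p \<Longrightarrow> f p = g p"
proof (induction "card (poset_interval A le b p)" arbitrary: p rule: less_induct)
  case less
  let ?I = "poset_interval A le b p"
  have p_in: "p \<in> ?I" using less.prems \<open>b \<in> A\<close> reflexive by (simp add: mem_interval_iff)
  have "sum f (?I - {p}) = sum g (?I - {p})"
  proof (rule sum.cong[OF refl])
    fix z assume "z \<in> ?I - {p}"
    then have z: "z \<in> ?I" "z \<noteq> p" by auto
    then have "z \<in> A" "le b z" by (simp_all add: mem_interval_iff)
    moreover have "card (poset_interval A le b z) < card ?I"
      using card_interval_less[OF \<open>b \<in> A\<close> \<open>p \<in> A\<close> z] .
    ultimately show "f z = g z" using less.hyps by blast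
  qed
  moreover have "sum f ?I = sum g ?I" using sums_eq less.prems .
  moreover have "sum h ?I = h p + sum h (?I - {p})" for h :: "'e \<Rightarrow> 'a"
    using sum.remove[OF finite_interval[OF \<open>b \<in> A\<close> \<open>p \<in> A\<close>] p_in] .
  ultimately show "f p = g p" by (metis add_right_cancel)
qed

definition subinterval_rel :: "(('e \<times> 'e) \<times> ('e \<times> 'e)) set" where
  "subinterval_rel = {((x, z), (x', y)). x' = x \<and> x \<in> A \<and> y \<in> A \<and> z \<in> poset_interval A le x y - {y}}"

lemma wf_subinterval_rel: "wf subinterval_rel"
proof (rule wf_subset)
  show "wf (measure (\<lambda>(x, y). card (poset_interval A le x y)))" by simp
  show "subinterval_rel \<subseteq> measure (\<lambda>(x, y). card (poset_interval A le x y))"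
  proof
    fix r assume "r \<in> subinterval_rel"
    then obtain x y z where "r = ((x, z), (x, y))" "x \<in> A" "y \<in> A"
      "z \<in> poset_interval A le x y" "z \<noteq> y"
      unfolding subinterval_rel_def by auto
    then show "r \<in> measure (\<lambda>(x, y). card (poset_interval A le x y))"
      using card_interval_less[of x y z] by simp
  qed
qed

lemma mobius_rec_cong:
  assumes "\<And>z. ((x, z), (x, y)) \<in> subinterval_rel \<Longrightarrow> m x z = m' x z"
  shows "mobius_rec A le m x y = mobius_rec A le m' x y"
proof (cases "x \<in> A \<and> y \<in> A")
  case True
  let ?Z = "{z\<in>A. le x z \<and> le z y \<and> z \<noteq> y}"
  have "m x z = m' x z" if "z \<in> ?Z" for z
  proof (rule assms)
    show "((x, z), (x, y)) \<in> subinterval_rel"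
      using that True by (simp add: subinterval_rel_def mem_interval_iff)
  qed
  then have "sum (m x) ?Z = sum (m' x) ?Z" by (rule sum.cong[OF refl])
  then show ?thesis unfolding mobius_rec_def by simp
next
  case False
  then show ?thesis unfolding mobius_rec_def by auto
qed

lemma ex1_mobius_rec_fixpoint: "\<exists>!m::'e \<Rightarrow> 'e \<Rightarrow> 'k::field. \<forall>x y. m x y = mobius_rec A le m x y"
proof (rule ex_ex1I)
  define G where "G = (\<lambda>(f :: 'e \<times> 'e \<Rightarrow> 'k) (x, y). mobius_rec A le (curry f) x y)"
  define m where "m = curry (wfrec subinterval_rel G)"
  have "\<forall>x y. m x y = mobius_rec A le m x y"
  proof (intro allI)
    fix x y
    have "m x y = G (cut (wfrec subinterval_rel G) subinterval_rel (x, y)) (x, y)"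
      unfolding m_def curry_def by (rule wfrec[OF wf_subinterval_rel])
    also have "\<dots> = mobius_rec A le (curry (cut (wfrec subinterval_rel G) subinterval_rel (x, y))) x y"
      unfolding G_def by simp
    also have "\<dots> = mobius_rec A le m x y"
      by (rule mobius_rec_cong) (simp add: cut_apply m_def)
    finally show "m x y = mobius_rec A le m x y" .
  qed
  then show "\<exists>m::'e \<Rightarrow> 'e \<Rightarrow> 'k. \<forall>x y. m x y = mobius_rec A le m x y" by blast
next
  fix m m' :: "'e \<Rightarrow> 'e \<Rightarrow> 'k"
  assume m: "\<forall>x y. m x y = mobius_rec A le m x y" and m': "\<forall>x y. m' x y = mobius_rec A le m' x y"
  have "m x y = m' x y" for x y
  proof (induction "(x, y)" arbitrary: x y rule: wf_induct_rule[OF wf_subinterval_rel])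
    case 1
    then show ?case using m m' mobius_rec_cong by metis
  qed
  then show "m = m'" by blast
qed

lemma mobius_unfold: "mobius A le x y = (mobius_rec A le (mobius A le) x y :: 'k::field)"
proof -
  have mobius_eq: "mobius A le = (THE m::'e \<Rightarrow> 'e \<Rightarrow> 'k. \<forall>x y. m x y = mobius_rec A le m x y)"
    unfolding mobius_def mobius_rec_def ..
  from theI'[OF ex1_mobius_rec_fixpoint[where 'k='k]] show ?thesis
    unfolding mobius_eq by blast
qed

lemma mobius_eq_0: "\<not> (x \<in> A \<and> y \<in> A \<and> le x y) \<Longrightarrow> mobius A le x y = (0::'k::field)"
  by (subst mobius_unfold) (auto simp: mobius_rec_def)

lemma interval_minus_top:
  "poset_interval A le x y - {y} = {z\<in>A. le x z \<and> le z y \<and> z \<noteq> y}"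
  by (auto simp: poset_interval_def)

lemma sum_interval_split_top:
  assumes "x \<in> A" "y \<in> A" "le x y"
  shows "sum f (poset_interval A le x y) = f y + (\<Sum>z\<in>{z\<in>A. le x z \<and> le z y \<and> z \<noteq> y}. f z)"
proof -
  have "y \<in> poset_interval A le x y"
    using assms reflexive[OF assms(2)] by (simp add: mem_interval_iff)
  from sum.remove[OF finite_interval[OF assms(1,2)] this] show ?thesis
    by (simp only: interval_minus_top)
qed

lemma interval_singleton: "x \<in> A \<Longrightarrow> poset_interval A le x x = {x}"
proof (intro set_eqI iffI)
  fix z assume "x \<in> A" "z \<in> poset_interval A le x x"
  then show "z \<in> {x}" using antisymmetric[of x z] by (simp add: mem_interval_iff)
next
  fix z assume "x \<in> A" "z \<in> {x}"
  then show "z \<in> poset_interval A le x x" using reflexive[of x] by (simp add: mem_interval_iff)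
qed

lemma sum_mobius_interval:
  assumes "x \<in> A" "y \<in> A" "le x y"
  shows "(\<Sum>z\<in>poset_interval A le x y. mobius A le x z) = (if x = y then 1 else (0::'k::field))"
proof (cases "x = y")
  case True
  have "mobius A le x x = (1::'k)"
    using assms(1) reflexive[OF assms(1)] by (subst mobius_unfold) (simp add: mobius_rec_def)
  then show ?thesis using True interval_singleton[OF assms(1)] by simp
next
  case False
  have "mobius A le x y = - (\<Sum>z\<in>{z\<in>A. le x z \<and> le z y \<and> z \<noteq> y}. mobius A le x z :: 'k)"
    using False assms by (subst mobius_unfold) (simp add: mobius_rec_def)
  then show ?thesis using False sum_interval_split_top[OF assms, of "mobius A le x :: 'e \<Rightarrow> 'k"] by simp
qed

lemma mobius_eqI:
  fixes m :: "'e \<Rightarrow> 'e \<Rightarrow> 'k::field"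
  assumes outside: "\<And>x y. \<not> (x \<in> A \<and> y \<in> A \<and> le x y) \<Longrightarrow> m x y = 0"
    and interval_sums: "\<And>x y. x \<in> A \<Longrightarrow> y \<in> A \<Longrightarrow> le x y \<Longrightarrow>
      (\<Sum>z\<in>poset_interval A le x y. m x z) = (if x = y then 1 else 0)"
  shows "m = mobius A le"
proof -
  have "m x y = mobius_rec A le m x y" for x y
  proof (cases "x \<in> A \<and> y \<in> A \<and> le x y")
    case True
    then have "(\<Sum>z\<in>poset_interval A le x y. m x z) = (if x = y then 1 else 0)"
      by (simp add: interval_sums)
    then show ?thesis
      using True sum_interval_split_top[of x y "m x"] interval_singleton[of x]
      by (simp add: mobius_rec_def eq_neg_iff_add_eq_0 split: if_splits)
  next
    case False
    then show ?thesis using outside[OF False] unfolding mobius_rec_def by presburger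
  qed
  moreover have "mobius A le x y = mobius_rec A le (mobius A le) x y" for x y
    by (rule mobius_unfold)
  ultimately show ?thesis using ex1_mobius_rec_fixpoint by blast
qed

end

definition prod_le :: "('a \<Rightarrow> 'a \<Rightarrow> bool) \<Rightarrow> ('b \<Rightarrow> 'b \<Rightarrow> bool) \<Rightarrow> 'a \<times> 'b \<Rightarrow> 'a \<times> 'b \<Rightarrow> bool" where
  "prod_le le1 le2 p q \<longleftrightarrow> le1 (fst p) (fst q) \<and> le2 (snd p) (snd q)"

lemma poset_interval_prod:
  "poset_interval (A \<times> B) (prod_le le1 le2) p q =
    poset_interval A le1 (fst p) (fst q) \<times> poset_interval B le2 (snd p) (snd q)"
  by (auto simp: poset_interval_def prod_le_def)

lemma lf_poset_prod:
  assumes "lf_poset A le1" "lf_poset B le2"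
  shows "lf_poset (A \<times> B) (prod_le le1 le2)"
proof -
  interpret P1: lf_poset A le1 by fact
  interpret P2: lf_poset B le2 by fact
  have reflexive: "prod_le le1 le2 p p" if "p \<in> A \<times> B" for p
    using that P1.reflexive[of "fst p"] P2.reflexive[of "snd p"]
    by (simp add: prod_le_def mem_Times_iff)
  have antisymmetric: "p = q"
    if "p \<in> A \<times> B" "q \<in> A \<times> B" "prod_le le1 le2 p q \<and> prod_le le1 le2 q p" for p q
    using that P1.antisymmetric[of "fst p" "fst q"] P2.antisymmetric[of "snd p" "snd q"]
    by (simp add: prod_le_def prod_eq_iff mem_Times_iff)
  have transitive: "prod_le le1 le2 p r"
    if "p \<in> A \<times> B" "q \<in> A \<times> B" "r \<in> A \<times> B" "prod_le le1 le2 p q \<and> prod_le le1 le2 q r"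
    for p q r
    using that P1.transitive[of "fst p" "fst q" "fst r"] P2.transitive[of "snd p" "snd q" "snd r"]
    by (simp add: prod_le_def mem_Times_iff)
  have finite_intervals: "finite {z \<in> A \<times> B. prod_le le1 le2 p z \<and> prod_le le1 le2 z q}"
    if "p \<in> A \<times> B" "q \<in> A \<times> B" for p q
    using that P1.finite_interval[of "fst p" "fst q"] P2.finite_interval[of "snd p" "snd q"]
      poset_interval_prod[of A B le1 le2 p q]
    by (simp add: poset_interval_def mem_Times_iff)
  show ?thesis
    unfolding lf_poset_def locally_finite_poset_def partial_order_on_set_def
    by (intro conjI ballI impI) (fact reflexive antisymmetric transitive finite_intervals)+
qed

lemma mobius_prod:
  assumes "lf_poset A le1" "lf_poset B le2"
  shows "mobius (A \<times> B) (prod_le le1 le2) p q =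
    mobius A le1 (fst p) (fst q) * (mobius B le2 (snd p) (snd q) :: 'k::field)"
proof -
  interpret P1: lf_poset A le1 by fact
  interpret P2: lf_poset B le2 by fact
  interpret P: lf_poset "A \<times> B" "prod_le le1 le2" using lf_poset_prod[OF assms] .
  have eq: "(\<lambda>p q. mobius A le1 (fst p) (fst q) * (mobius B le2 (snd p) (snd q) :: 'k)) =
    mobius (A \<times> B) (prod_le le1 le2)"
  proof (rule P.mobius_eqI)
    fix p q :: "'a \<times> 'b"
    assume "\<not> (p \<in> A \<times> B \<and> q \<in> A \<times> B \<and> prod_le le1 le2 p q)"
    then have "\<not> (fst p \<in> A \<and> fst q \<in> A \<and> le1 (fst p) (fst q)) \<or>
      \<not> (snd p \<in> B \<and> snd q \<in> B \<and> le2 (snd p) (snd q))"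
      by (auto simp: prod_le_def mem_Times_iff)
    then show "mobius A le1 (fst p) (fst q) * mobius B le2 (snd p) (snd q) = (0::'k)"
    proof
      assume "\<not> (fst p \<in> A \<and> fst q \<in> A \<and> le1 (fst p) (fst q))"
      then show ?thesis using P1.mobius_eq_0[where 'k='k] by simp
    next
      assume "\<not> (snd p \<in> B \<and> snd q \<in> B \<and> le2 (snd p) (snd q))"
      then show ?thesis using P2.mobius_eq_0[where 'k='k] by simp
    qed
  next
    fix p q :: "'a \<times> 'b"
    assume "p \<in> A \<times> B" "q \<in> A \<times> B" "prod_le le1 le2 p q"
    then have p: "fst p \<in> A" "snd p \<in> B" and q: "fst q \<in> A" "snd q \<in> B"
      and le: "le1 (fst p) (fst q)" "le2 (snd p) (snd q)"
      by (auto simp: prod_le_def mem_Times_iff)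
    have "(\<Sum>z\<in>poset_interval (A \<times> B) (prod_le le1 le2) p q.
        mobius A le1 (fst p) (fst z) * mobius B le2 (snd p) (snd z)) =
      (\<Sum>a\<in>poset_interval A le1 (fst p) (fst q). mobius A le1 (fst p) a) *
      (\<Sum>b\<in>poset_interval B le2 (snd p) (snd q). mobius B le2 (snd p) b :: 'k)"
      by (simp add: poset_interval_prod sum.cartesian_product' sum_product)
    also have "\<dots> = (if fst p = fst q then 1 else 0) * (if snd p = snd q then 1 else 0)"
      by (simp only: P1.sum_mobius_interval[OF p(1) q(1) le(1)] P2.sum_mobius_interval[OF p(2) q(2) le(2)])
    also have "\<dots> = (if p = q then 1 else 0)" by (simp add: prod_eq_iff)
    finally show "(\<Sum>z\<in>poset_interval (A \<times> B) (prod_le le1 le2) p q.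
        mobius A le1 (fst p) (fst z) * mobius B le2 (snd p) (snd z)) = (if p = q then 1 else (0::'k))" .
  qed
  show ?thesis unfolding eq[symmetric] ..
qed

lemma formal_sum_eq_sum:
  assumes "finite B" "B \<subseteq> P" "\<And>i. i \<in> P - B \<Longrightarrow> f i v = 0"
  shows "formal_sum f P v = (\<Sum>i\<in>B. f i v)"
  unfolding formal_sum_def
proof (rule sum.mono_neutral_left[OF \<open>finite B\<close>])
  show "{i \<in> P. f i v \<noteq> 0} \<subseteq> B" using assms(3) by blast
  show "\<forall>i\<in>B - {i \<in> P. f i v \<noteq> 0}. f i v = 0" using assms(2) by blast
qed

lemma formal_sum_eq_0: "(\<And>i. i \<in> P \<Longrightarrow> f i v = 0) \<Longrightarrow> formal_sum f P v = 0"
  by (simp add: formal_sum_def)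

lemma formal_sum_bas: "formal_sum (\<lambda>y u. c y * bas y u) B = (\<lambda>u. if u \<in> B then c u else (0::'k::field))"
proof
  fix u
  have "formal_sum (\<lambda>y u. c y * bas y u) B u = (\<Sum>y\<in>B \<inter> {u}. c y * bas y u)"
    by (rule formal_sum_eq_sum) (auto simp: bas_def)
  then show "formal_sum (\<lambda>y u. c y * bas y u) B u = (if u \<in> B then c u else 0)"
    by (simp add: bas_def Int_insert_right)
qed

lemma tens_bas: "tens (bas a) (bas b) = (bas (a, b) :: _ \<Rightarrow> 'k::field)"
  by (auto simp: tens_def bas_def)

lemma omega_eq_mobius:
  assumes "lf_poset (car I) (le I)"
  shows "omega car le I x = (mobius (car I) (le I) x :: _ \<Rightarrow> 'k::field)"
proof
  fix u
  show "omega car le I x u = (mobius (car I) (le I) x u :: 'k)"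
    using lf_poset.mobius_eq_0[OF assms, of x u, where 'k='k]
    by (auto simp: omega_def formal_sum_bas)
qed

locale galois_connection = A: lf_poset A leA + P: lf_poset P leP
  for A :: "'a set" and leA and P :: "'p set" and leP +
  fixes D :: "'a \<Rightarrow> 'p" and M :: "'p \<Rightarrow> 'a"
  assumes D_in: "w \<in> A \<Longrightarrow> D w \<in> P"
    and M_in: "q \<in> P \<Longrightarrow> M q \<in> A"
    and adjunction: "w \<in> A \<Longrightarrow> q \<in> P \<Longrightarrow> leP (D w) q \<longleftrightarrow> leA w (M q)"
begin

lemma le_M_D: "w \<in> A \<Longrightarrow> leA w (M (D w))"
  using adjunction[OF _ D_in] P.reflexive[OF D_in] by blast

lemma D_M_le: "q \<in> P \<Longrightarrow> leP (D (M q)) q"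
  using adjunction[OF M_in] A.reflexive[OF M_in] by blast

lemma D_mono: "w \<in> A \<Longrightarrow> w' \<in> A \<Longrightarrow> leA w w' \<Longrightarrow> leP (D w) (D w')"
  using adjunction[OF _ D_in] A.transitive[OF _ _ M_in[OF D_in]] le_M_D by blast

lemma fibre_subset_interval:
  assumes "p \<in> P"
  shows "{w\<in>A. leA x w \<and> D w = p} \<subseteq> poset_interval A leA x (M p)"
proof
  fix w assume "w \<in> {w\<in>A. leA x w \<and> D w = p}"
  then have "w \<in> A" "leA x w" "D w = p" by simp_all
  then show "w \<in> poset_interval A leA x (M p)"
    using adjunction[OF \<open>w \<in> A\<close> assms] P.reflexive[OF assms] by (simp add: A.mem_interval_iff)
qed

lemma preimage_subset_interval:
  "{q\<in>P. M q = x \<and> leP q p} \<subseteq> poset_interval P leP (D x) p"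
proof
  fix q assume "q \<in> {q\<in>P. M q = x \<and> leP q p}"
  then have "q \<in> P" "M q = x" "leP q p" by simp_all
  then show "q \<in> poset_interval P leP (D x) p"
    using D_M_le[OF \<open>q \<in> P\<close>] by (simp add: P.mem_interval_iff)
qed

lemma interval_sum_fibres:
  assumes "x \<in> A" "p \<in> P" "leP (D x) p"
  shows "(\<Sum>p'\<in>poset_interval P leP (D x) p. \<Sum>w\<in>{w\<in>A. leA x w \<and> D w = p'}. mobius A leA x w) =
    (if M p = x then 1 else (0::'k::field))"
proof -
  let ?I = "poset_interval P leP (D x) p" and ?W = "poset_interval A leA x (M p)"
  have Mp: "M p \<in> A" "leA x (M p)"
    using M_in[OF assms(2)] adjunction[OF assms(1,2)] assms(3) by simp_all
  have fibre_eq: "{w\<in>A. leA x w \<and> D w = p'} = {w\<in>?W. D w = p'}" if "p' \<in> ?I" for p'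
  proof (intro set_eqI iffI)
    fix w assume "w \<in> {w\<in>A. leA x w \<and> D w = p'}"
    then have "w \<in> A" "leA x w" "D w = p'" by simp_all
    moreover have "leP p' p" using that by (simp add: P.mem_interval_iff)
    ultimately show "w \<in> {w\<in>?W. D w = p'}"
      using adjunction[OF \<open>w \<in> A\<close> assms(2)] by (simp add: A.mem_interval_iff)
  qed (simp add: A.mem_interval_iff)
  have "(\<Sum>p'\<in>?I. \<Sum>w\<in>{w\<in>A. leA x w \<and> D w = p'}. mobius A leA x w) =
      (\<Sum>p'\<in>?I. \<Sum>w\<in>{w\<in>?W. D w = p'}. mobius A leA x w :: 'k)"
    by (rule sum.cong[OF refl]) (simp only: fibre_eq)
  also have "\<dots> = (\<Sum>w\<in>?W. mobius A leA x w)"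
  proof (rule sum.group)
    show "finite ?W" by (rule A.finite_interval[OF assms(1) Mp(1)])
    show "finite ?I" by (rule P.finite_interval[OF D_in[OF assms(1)] assms(2)])
    show "D ` ?W \<subseteq> ?I"
    proof
      fix p' assume "p' \<in> D ` ?W"
      then obtain w where "w \<in> A" "leA x w" "leA w (M p)" "p' = D w"
        by (auto simp: A.mem_interval_iff)
      then show "p' \<in> ?I"
        using D_in[OF \<open>w \<in> A\<close>] D_mono[OF assms(1) \<open>w \<in> A\<close>] adjunction[OF \<open>w \<in> A\<close> assms(2)]
        by (simp add: P.mem_interval_iff)
    qed
  qed
  also have "\<dots> = (if M p = x then 1 else 0)"
    using A.sum_mobius_interval[OF assms(1) Mp] by auto
  finally show ?thesis .
qed

lemma interval_sum_preimages:
  assumes "x \<in> A" "p \<in> P"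
  shows "(\<Sum>p'\<in>poset_interval P leP (D x) p. \<Sum>q\<in>{q\<in>P. M q = x \<and> leP q p'}. mobius P leP q p') =
    (if M p = x then 1 else (0::'k::field))"
proof -
  let ?I = "poset_interval P leP (D x) p" and ?Q = "{q\<in>P. M q = x \<and> leP q p}"
  have finite_I: "finite ?I" using P.finite_interval[OF D_in[OF assms(1)] assms(2)] .
  have finite_Q: "finite ?Q" using finite_I preimage_subset_interval by (rule rev_finite_subset)
  have "{q\<in>P. M q = x \<and> leP q p'} = {q\<in>?Q. leP q p'}" if "p' \<in> ?I" for p'
  proof (intro set_eqI iffI)
    fix q assume "q \<in> {q\<in>P. M q = x \<and> leP q p'}"
    moreover have "p' \<in> P" "leP p' p" using that by (simp_all add: P.mem_interval_iff)
    ultimately show "q \<in> {q\<in>?Q. leP q p'}" using P.transitive[OF _ _ assms(2)] by auto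
  qed simp
  then have "(\<Sum>p'\<in>?I. \<Sum>q\<in>{q\<in>P. M q = x \<and> leP q p'}. mobius P leP q p') =
      (\<Sum>p'\<in>?I. \<Sum>q\<in>{q\<in>?Q. leP q p'}. mobius P leP q p' :: 'k)"
    by (intro sum.cong refl) simp
  also have "\<dots> = (\<Sum>q\<in>?Q. \<Sum>p'\<in>{p'\<in>?I. leP q p'}. mobius P leP q p')"
    by (rule sum.swap_restrict[OF finite_I finite_Q])
  also have "\<dots> = (\<Sum>q\<in>?Q. if q = p then 1 else 0)"
  proof (rule sum.cong[OF refl])
    fix q assume "q \<in> ?Q"
    then have q: "q \<in> P" "M q = x" "leP q p" by simp_all
    have "{p'\<in>?I. leP q p'} = poset_interval P leP q p"
    proof (intro set_eqI iffI)
      fix p' assume "p' \<in> poset_interval P leP q p"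
      then show "p' \<in> {p'\<in>?I. leP q p'}"
        using D_M_le[OF q(1)] P.transitive[OF D_in[OF assms(1)] q(1)] q(2)
        by (auto simp: P.mem_interval_iff)
    qed (simp add: P.mem_interval_iff)
    then show "(\<Sum>p'\<in>{p'\<in>?I. leP q p'}. mobius P leP q p') = (if q = p then 1 else (0::'k))"
      using P.sum_mobius_interval[OF q(1) assms(2) q(3)] by simp
  qed
  also have "\<dots> = (if M p = x then 1 else 0)"
    using sum.delta[OF finite_Q, of p "\<lambda>_. 1::'k"] assms(2) P.reflexive[OF assms(2)] by simp
  finally show ?thesis .
qed

theorem sum_mobius_fibre_eq_sum_mobius_preimage:
  assumes "x \<in> A" "p \<in> P"
  shows "(\<Sum>w\<in>{w\<in>A. leA x w \<and> D w = p}. mobius A leA x w) =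
    (\<Sum>q\<in>{q\<in>P. M q = x \<and> leP q p}. mobius P leP q p :: 'k::field)"
proof (cases "leP (D x) p")
  case True
  show ?thesis
  proof (rule P.eq_if_interval_sums_eq[OF D_in[OF assms(1)] _ assms(2) True,
        where f = "\<lambda>p. \<Sum>w\<in>{w\<in>A. leA x w \<and> D w = p}. mobius A leA x w"
          and g = "\<lambda>p. \<Sum>q\<in>{q\<in>P. M q = x \<and> leP q p}. mobius P leP q p"])
    fix p' assume "p' \<in> P" "leP (D x) p'"
    then show "(\<Sum>p\<in>poset_interval P leP (D x) p'. \<Sum>w\<in>{w\<in>A. leA x w \<and> D w = p}. mobius A leA x w) =
      (\<Sum>p\<in>poset_interval P leP (D x) p'. \<Sum>q\<in>{q\<in>P. M q = x \<and> leP q p}. mobius P leP q p :: 'k)"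
      by (simp only: interval_sum_fibres[OF assms(1) \<open>p' \<in> P\<close> \<open>leP (D x) p'\<close>]
          interval_sum_preimages[OF assms(1) \<open>p' \<in> P\<close>])
  qed
next
  case False
  have no_fibre: "{w\<in>A. leA x w \<and> D w = p} = {}"
    using D_mono[OF assms(1)] False by blast
  have no_preimage: "{q\<in>P. M q = x \<and> leP q p} = {}"
  proof -
    have "q \<notin> poset_interval P leP (D x) p" for q
      using P.transitive[OF D_in[OF assms(1)] _ assms(2)] False by (auto simp: P.mem_interval_iff)
    then show ?thesis using preimage_subset_interval[of x p] by blast
  qed
  show ?thesis unfolding no_fibre no_preimage by simp
qed

theorem push_forward_inverted_basis:
  assumes "x \<in> A"
  shows "formal_sum (\<lambda>w p. mobius A leA x w * bas (D w) p) A =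
    (formal_sum (mobius P leP) {q\<in>P. M q = x} :: 'p \<Rightarrow> 'k::field)"
proof
  fix p
  show "formal_sum (\<lambda>w p. mobius A leA x w * bas (D w) p) A p =
    (formal_sum (mobius P leP) {q\<in>P. M q = x} p :: 'k)"
  proof (cases "p \<in> P")
    case True
    let ?W = "{w\<in>A. leA x w \<and> D w = p}" and ?Q = "{q\<in>P. M q = x \<and> leP q p}"
    have "formal_sum (\<lambda>w p. mobius A leA x w * bas (D w) p) A p =
        (\<Sum>w\<in>?W. mobius A leA x w * bas (D w) p :: 'k)"
    proof (rule formal_sum_eq_sum)
      show "finite ?W"
        using A.finite_interval[OF assms M_in[OF True]] fibre_subset_interval[OF True]
        by (rule rev_finite_subset)
      show "mobius A leA x w * bas (D w) p = (0::'k)" if "w \<in> A - ?W" for w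
        using that A.mobius_eq_0[of x w, where 'k='k] by (auto simp: bas_def)
    qed auto
    also have "\<dots> = (\<Sum>w\<in>?W. mobius A leA x w)" by (simp add: bas_def)
    also have "\<dots> = (\<Sum>q\<in>?Q. mobius P leP q p)"
      by (rule sum_mobius_fibre_eq_sum_mobius_preimage[OF assms True])
    also have "\<dots> = formal_sum (mobius P leP) {q\<in>P. M q = x} p"
    proof (rule formal_sum_eq_sum[symmetric])
      show "finite ?Q"
        using P.finite_interval[OF D_in[OF assms] True] preimage_subset_interval
        by (rule rev_finite_subset)
      show "mobius P leP q p = (0::'k)" if "q \<in> {q\<in>P. M q = x} - ?Q" for q
        using that P.mobius_eq_0[of q p, where 'k='k] by auto
    qed auto
    finally show ?thesis .
  next
    case False
    have "formal_sum (\<lambda>w p. mobius A leA x w * bas (D w) p) A p = (0::'k)"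
      by (rule formal_sum_eq_0) (use False D_in in \<open>auto simp: bas_def\<close>)
    moreover have "formal_sum (mobius P leP) {q\<in>P. M q = x} p = (0::'k)"
      by (rule formal_sum_eq_0) (use False P.mobius_eq_0 in auto)
    ultimately show ?thesis by simp
  qed
qed

end

lemma poset_species_lf_poset:
  "poset_species car le act one \<Longrightarrow> finite I \<Longrightarrow> lf_poset (car I) (le I)"
  unfolding poset_species_def lf_poset_def by (elim conjE allE[of _ I]) (rule mp)

lemma poset_comonoid_species: "poset_comonoid car le act one comult \<Longrightarrow> poset_species car le act one"
  unfolding poset_comonoid_def by (elim conjE)

lemma comult_mem:
  assumes "poset_comonoid car le act one comult" "finite S" "finite T" "S \<inter> T = {}" "w \<in> car (S \<union> T)"
  shows "comult S T w \<in> car S \<times> car T"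
proof -
  from assms(1) have "\<forall>S T. finite S \<and> finite T \<and> S \<inter> T = {} \<longrightarrow>
      (\<forall>x\<in>car (S \<union> T). fst (comult S T x) \<in> car S \<and> snd (comult S T x) \<in> car T)"
    unfolding poset_comonoid_def by (elim conjE)
  then show ?thesis using assms(2-5) by (simp add: mem_Times_iff)
qed

lemma mult_mem:
  assumes "poset_monoid car le act one mult" "finite S" "finite T" "S \<inter> T = {}"
    "a \<in> car S" "b \<in> car T"
  shows "mult S T a b \<in> car (S \<union> T)"
proof -
  from assms(1) have "\<forall>S T. finite S \<and> finite T \<and> S \<inter> T = {} \<longrightarrow>
      (\<forall>x\<in>car S. \<forall>y\<in>car T. mult S T x y \<in> car (S \<union> T))"
    unfolding poset_monoid_def by (elim conjE)
  then show ?thesis using assms(2-6) by simp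
qed

lemma galois_connection_comult_mult:
  assumes "poset_comonoid car le act one comult" "poset_monoid car le act one mult"
    "adjoint_pair car le comult mult" "finite S" "finite T" "S \<inter> T = {}"
  shows "galois_connection (car (S \<union> T)) (le (S \<union> T)) (car S \<times> car T) (prod_le (le S) (le T))
    (comult S T) (case_prod (mult S T))"
proof -
  from poset_species_lf_poset[OF poset_comonoid_species[OF assms(1)]] assms(4,5)
  have lf_S: "lf_poset (car S) (le S)" and lf_T: "lf_poset (car T) (le T)"
    and lf_ST: "lf_poset (car (S \<union> T)) (le (S \<union> T))"
    by simp_all
  show ?thesis
  proof (intro galois_connection.intro galois_connection_axioms.intro)
    show "lf_poset (car (S \<union> T)) (le (S \<union> T))" by (fact lf_ST)
    show "lf_poset (car S \<times> car T) (prod_le (le S) (le T))" by (rule lf_poset_prod[OF lf_S lf_T])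
    show "comult S T w \<in> car S \<times> car T" if "w \<in> car (S \<union> T)" for w
      using comult_mem[OF assms(1,4-6) that] .
    show "case_prod (mult S T) q \<in> car (S \<union> T)" if "q \<in> car S \<times> car T" for q
      using that mult_mem[OF assms(2,4-6)] by (auto simp: mem_Times_iff split_beta)
    show "prod_le (le S) (le T) (comult S T w) q \<longleftrightarrow> le (S \<union> T) w (case_prod (mult S T) q)"
      if "w \<in> car (S \<union> T)" "q \<in> car S \<times> car T" for w q
      using assms(3) that assms(4-6) unfolding adjoint_pair_def prod_le_def
      by (simp add: mem_Times_iff split_beta)
  qed
qed

theorem mainTheorem2:
  fixes car :: "'a set \<Rightarrow> 'e set"
    and le :: "'a set \<Rightarrow> 'e \<Rightarrow> 'e \<Rightarrow> bool"
    and act :: "('a \<Rightarrow> 'a) \<Rightarrow> 'a set \<Rightarrow> 'e \<Rightarrow> 'e"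
    and one :: 'e
    and mult :: "'a set \<Rightarrow> 'a set \<Rightarrow> 'e \<Rightarrow> 'e \<Rightarrow> 'e"
    and comult :: "'a set \<Rightarrow> 'a set \<Rightarrow> 'e \<Rightarrow> 'e \<times> 'e"
    and S T :: "'a set"
    and x :: 'e
  assumes "poset_comonoid car le act one comult"
    and "poset_monoid car le act one mult"
    and "adjoint_pair car le comult mult"
    and "finite S" and "finite T" and "S \<inter> T = {}"
    and "x \<in> car (S \<union> T)"
  shows "(lin_comult car comult S T (omega car le (S \<union> T) x) :: 'e \<times> 'e \<Rightarrow> 'k::field_char_0) =
         formal_sum (\<lambda>(x1, x2). tens (omega car le S x1) (omega car le T x2))
           {(x1, x2). x1 \<in> car S \<and> x2 \<in> car T \<and> mult S T x1 x2 = x}"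
proof -
  from poset_species_lf_poset[OF poset_comonoid_species[OF assms(1)]] assms(4,5)
  have lf_S: "lf_poset (car S) (le S)" and lf_T: "lf_poset (car T) (le T)"
    and lf_ST: "lf_poset (car (S \<union> T)) (le (S \<union> T))"
    by simp_all
  interpret galois_connection "car (S \<union> T)" "le (S \<union> T)" "car S \<times> car T" "prod_le (le S) (le T)"
    "comult S T" "case_prod (mult S T)"
    using galois_connection_comult_mult[OF assms(1-6)] .
  have "lin_comult car comult S T (omega car le (S \<union> T) x) =
      formal_sum (\<lambda>w p. mobius (car (S \<union> T)) (le (S \<union> T)) x w * bas (comult S T w) p) (car (S \<union> T))"
    unfolding lin_comult_def omega_eq_mobius[where car = car and le = le, OF lf_ST] tens_bas by simp
  also have "\<dots> = formal_sum (mobius (car S \<times> car T) (prod_le (le S) (le T)))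
      {q \<in> car S \<times> car T. case_prod (mult S T) q = x}"
    using push_forward_inverted_basis[OF assms(7)] .
  also have "\<dots> = (formal_sum (\<lambda>(x1, x2). tens (omega car le S x1) (omega car le T x2))
      {(x1, x2). x1 \<in> car S \<and> x2 \<in> car T \<and> mult S T x1 x2 = x} :: 'e \<times> 'e \<Rightarrow> 'k)"
  proof -
    have "(\<lambda>(x1, x2). tens (omega car le S x1) (omega car le T x2)) =
        (mobius (car S \<times> car T) (prod_le (le S) (le T)) :: _ \<Rightarrow> _ \<Rightarrow> 'k)"
      by (simp add: fun_eq_iff split_beta tens_def mobius_prod[OF lf_S lf_T]
          omega_eq_mobius[where car = car and le = le, OF lf_S]
          omega_eq_mobius[where car = car and le = le, OF lf_T])
    moreover have "{(x1, x2). x1 \<in> car S \<and> x2 \<in> car T \<and> mult S T x1 x2 = x} =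
        {q \<in> car S \<times> car T. case_prod (mult S T) q = x}"
      by auto
    ultimately show ?thesis by simp
  qed
  finally show ?thesis .
qed

end
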